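(* Consider the parametric multistage setting of the context, and assume: (A1) the noises $\mathbf{W}_1,\dots,\mathbf{W}_T$ are independent and each has finite support; (A2) (i) $\Phi(p)<+\infty$ for some $p\in\mathcal{P}_{\mathrm{ad}}$; (ii) each $f_t$ is affine in $(x,u)$; (iii) for all $t$ and all $w\in\mathrm{Supp}(\mathbf{W}_{t+1})$, $L_t(\cdot,\cdot,w,\cdot)\in\Gamma_{\mathcal{K}}[\mathbb{X}\times\mathbb{U},\mathbb{P}]$; (iv) $K\in\Gamma[\mathbb{X},\mathbb{P}]$; (A4) there is a compact $\mathcal{P}\subset\mathbb{P}$ with $\mathrm{dom}\,L_t(x,u,w,\cdot)\subset\mathcal{P}$ for all $(x,u)$, all $t$ and all $w\in\mathrm{Supp}(\mathbf{W}_{t+1})$, and $\mathrm{dom}\,K(x,\cdot)\subset\mathcal{P}$ for all $x$. Suppose moreover that $\mathcal{P}_{\mathrm{ad}}$ is compact, let $(\mu_n)_{n\in\mathbb{N}}$ be a nonincreasing sequence of positive reals with $\mu_n\to0$, and let $\Phi^\star=\inf_{p\in\mathcal{P}_{\mathrm{ad}}}\Phi(p)$. Then $$\inf_{p\in\mathcal{P}_{\mathrm{ad}}}\widetilde{V}^{\mu_n}_0(x_0,p)\le\Phi^\star\ \text{ for all }n\in\mathbb{N},\qquad\text{and}\qquad\inf_{p\in\mathcal{P}_{\mathrm{ad}}}\widetilde{V}^{\mu_n}_0(x_0,p)\xrightarrow[n\to+\infty]{}\Phi^\star.$$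
   Context: Setting: $T\ge1$; $\mathbb{X}=\mathbb{R}^{n_x}$, $\mathbb{U}=\mathbb{R}^{n_u}$, $\mathbb{W}=\mathbb{R}^{n_w}$, $\mathbb{P}=\mathbb{R}^{n_p}$; $\mathbf{W}_1,\dots,\mathbf{W}_T$ are $\mathbb{W}$-valued random variables, $\mathrm{Supp}$ = set of values taken with positive probability; dynamics $f_t:\mathbb{X}\times\mathbb{U}\times\mathbb{W}\to\mathbb{X}$, stage costs $L_t:\mathbb{X}\times\mathbb{U}\times\mathbb{W}\times\mathbb{P}\to\,]-\infty,+\infty]$ ($t=0,\dots,T-1$), final cost $K:\mathbb{X}\times\mathbb{P}\to\,]-\infty,+\infty]$, initial state $x_0\in\mathbb{X}$, admissible parameter set $\mathcal{P}_{\mathrm{ad}}\subseteq\mathbb{P}$. $\Phi(p)=\inf\mathbb{E}[\sum_{t=0}^{T-1}L_t(\mathbf{X}_t,\mathbf{U}_t,\mathbf{W}_{t+1},p)+K(\mathbf{X}_T,p)]$ over controls $\mathbf{U}_t$ measurable w.r.t. $\sigma(\mathbf{W}_1,\dots,\mathbf{W}_t)$, with $\mathbf{X}_0=x_0$, $\mathbf{X}_{t+1}=f_t(\mathbf{X}_t,\mathbf{U}_t,\mathbf{W}_{t+1})$. Moreau envelopes: $L^\mu_t(x,u,w,p)=\inf_{p'\in\mathbb{P}}(L_t(x,u,w,p')+\frac{1}{2\mu}\|p-p'\|_2^2)$, $K^\mu(x,p)=\inf_{p'\in\mathbb{P}}(K(x,p')+\frac{1}{2\mu}\|p-p'\|_2^2)$.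 Lower smooth value functions: $\widetilde{V}^\mu_T=K^\mu$, $\widetilde{V}^\mu_t(x,p)=\inf_{u\in\mathbb{U}}\mathbb{E}[L^\mu_t(x,u,\mathbf{W}_{t+1},p)+\widetilde{V}^\mu_{t+1}(f_t(x,u,\mathbf{W}_{t+1}),p)]$. $\mathrm{dom}\,g=\{g<+\infty\}$. $\Gamma[\mathbb{Y},\mathbb{P}]$ = lsc convex functions $\mathbb{Y}\times\mathbb{P}\to\,]-\infty,+\infty]$; $\Gamma_{\mathcal{K}}[\mathbb{X}\times\mathbb{U},\mathbb{P}]$ = those $\gamma\in\Gamma[\mathbb{X}\times\mathbb{U},\mathbb{P}]$ with $\mathrm{dom}\,\gamma(x,\cdot,p)\subset\mathcal{K}_\gamma$ for all $(x,p)$, for some compact $\mathcal{K}_\gamma\subset\mathbb{U}$. *)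

theory Defs
  imports "HOL-Analysis.Analysis" "HOL-Probability.Probability"
begin

definition lsc_ereal :: "('a::topological_space \<Rightarrow> ereal) \<Rightarrow> bool" where
  "lsc_ereal g \<longleftrightarrow> (\<forall>z. g z \<le> Liminf (at z) g)"

definition convex_ereal :: "('a::real_vector \<Rightarrow> ereal) \<Rightarrow> bool" where
  "convex_ereal g \<longleftrightarrow> (\<forall>y z a. 0 < a \<and> a < 1 \<longrightarrow>
      g ((1 - a) *\<^sub>R y + a *\<^sub>R z) \<le> ereal (1 - a) * g y + ereal a * g z)"

definition Gamma :: "('y::euclidean_space \<Rightarrow> 'p::euclidean_space \<Rightarrow> ereal) \<Rightarrow> bool" where
  "Gamma g \<longleftrightarrow> (\<forall>y p. g y p \<noteq> -\<infinity>) \<and>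
     lsc_ereal (\<lambda>(y,p). g y p) \<and> convex_ereal (\<lambda>(y,p). g y p)"

definition Gamma_K :: "('x::euclidean_space \<times> 'u::euclidean_space \<Rightarrow> 'p::euclidean_space \<Rightarrow> ereal) \<Rightarrow> bool" where
  "Gamma_K g \<longleftrightarrow> Gamma g \<and>
     (\<exists>KK. compact KK \<and> (\<forall>x p. {u. g (x,u) p < \<infinity>} \<subseteq> KK))"

definition affine_map :: "('a::real_vector \<Rightarrow> 'b::real_vector) \<Rightarrow> bool" where
  "affine_map h \<longleftrightarrow> (\<exists>l c. linear l \<and> (\<forall>z. h z = l z + c))"

definition moreau :: "real \<Rightarrow> ('p::euclidean_space \<Rightarrow> ereal) \<Rightarrow> 'p \<Rightarrow> ereal" where
  "moreau \<mu> g p = (INF p'. g p' + ereal ((norm (p - p'))\<^sup>2 / (2 * \<mu>)))"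

definition Efin :: "'a pmf \<Rightarrow> ('a \<Rightarrow> ereal) \<Rightarrow> ereal" where
  "Efin q g = (\<Sum>w\<in>set_pmf q. ereal (pmf q w) * g w)"

text \<open>Joint law of (W_1,...,W_t) for independent noises with laws Wd 1, ..., Wd t,
  as a list [w_1,...,w_t].\<close>
primrec hist :: "(nat \<Rightarrow> 'w pmf) \<Rightarrow> nat \<Rightarrow> 'w list pmf" where
  "hist Wd 0 = return_pmf []"
| "hist Wd (Suc t) = bind_pmf (hist Wd t) (\<lambda>h. map_pmf (\<lambda>w. h @ [w]) (Wd (Suc t)))"

text \<open>State trajectory: X_0 = x0, X_(t+1) = f_t(X_t, U_t, W_(t+1)) with U_t = pol t (w_1..w_t),
  where h = [w_1,...,w_T] and h ! t = w_(t+1).\<close>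
primrec traj :: "(nat \<Rightarrow> 'x \<Rightarrow> 'u \<Rightarrow> 'w \<Rightarrow> 'x) \<Rightarrow> 'x \<Rightarrow> (nat \<Rightarrow> 'w list \<Rightarrow> 'u)
                  \<Rightarrow> 'w list \<Rightarrow> nat \<Rightarrow> 'x" where
  "traj f x0 pol h 0 = x0"
| "traj f x0 pol h (Suc t) = f t (traj f x0 pol h t) (pol t (take t h)) (h ! t)"

text \<open>Value of the parametric multistage problem: infimum over nonanticipative policies
  (U_t a function of W_1..W_t) of the expected total cost.\<close>
definition Phi :: "nat \<Rightarrow> (nat \<Rightarrow> 'w pmf) \<Rightarrow> (nat \<Rightarrow> 'x \<Rightarrow> 'u \<Rightarrow> 'w \<Rightarrow> 'x)
     \<Rightarrow> (nat \<Rightarrow> 'x \<Rightarrow> 'u \<Rightarrow> 'w \<Rightarrow> 'p \<Rightarrow> ereal) \<Rightarrow> ('x \<Rightarrow> 'p \<Rightarrow> ereal) \<Rightarrow> 'x \<Rightarrow> 'p \<Rightarrow> ereal" where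
  "Phi T Wd f L K x0 p =
     (INF pol. Efin (hist Wd T) (\<lambda>h.
        (\<Sum>t<T. L t (traj f x0 pol h t) (pol t (take t h)) (h ! t) p) + K (traj f x0 pol h T) p))"

text \<open>Lower smooth value functions, indexed by the number n of remaining stages
  (time t = T - n).\<close>
primrec Vrem :: "nat \<Rightarrow> (nat \<Rightarrow> 'w pmf) \<Rightarrow> (nat \<Rightarrow> 'x \<Rightarrow> 'u \<Rightarrow> 'w \<Rightarrow> 'x)
     \<Rightarrow> (nat \<Rightarrow> 'x \<Rightarrow> 'u \<Rightarrow> 'w \<Rightarrow> 'p::euclidean_space \<Rightarrow> ereal) \<Rightarrow> ('x \<Rightarrow> 'p \<Rightarrow> ereal) \<Rightarrow> real
     \<Rightarrow> nat \<Rightarrow> 'x \<Rightarrow> 'p \<Rightarrow> ereal" where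
  "Vrem T Wd f L K \<mu> 0 x p = moreau \<mu> (K x) p"
| "Vrem T Wd f L K \<mu> (Suc n) x p =
     (let t = T - Suc n in
      INF u. Efin (Wd (Suc t)) (\<lambda>w. moreau \<mu> (L t x u w) p + Vrem T Wd f L K \<mu> n (f t x u w) p))"

definition Vlow :: "nat \<Rightarrow> (nat \<Rightarrow> 'w pmf) \<Rightarrow> (nat \<Rightarrow> 'x \<Rightarrow> 'u \<Rightarrow> 'w \<Rightarrow> 'x)
     \<Rightarrow> (nat \<Rightarrow> 'x \<Rightarrow> 'u \<Rightarrow> 'w \<Rightarrow> 'p::euclidean_space \<Rightarrow> ereal) \<Rightarrow> ('x \<Rightarrow> 'p \<Rightarrow> ereal) \<Rightarrow> real
     \<Rightarrow> nat \<Rightarrow> 'x \<Rightarrow> 'p \<Rightarrow> ereal" where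
  "Vlow T Wd f L K \<mu> t = Vrem T Wd f L K \<mu> (T - t)"

end

theory Submission
  imports Defs
begin

(* Dynamic programming identifies Phi(p) with the value at (x0, p) of the Bellman recursion for the
   original costs; the lower smooth value functions run the same recursion on the Moreau envelopes
   of the costs.  An envelope lies below its function, so every smoothed infimum is below inf Phi.
   Conversely, the Moreau envelopes of a lower semicontinuous g that is bounded below
   epi-converge: g(z, p) <= liminf g^mu_k(z_k, p_k) whenever z_k -> z, p_k -> p and mu_k -> 0.
   Continuity of the dynamics, compactness of the control domains and finiteness of the noise
   supports propagate this inequality backwards through the recursion, and compactness of P_ad
   carries it through the infimum over parameters, so inf Phi is at most the liminf of the
   smoothed infima.  The compact parameter domain supplies the uniform lower bounds needed to take
   lower limits of sums. *)

section \<open>Expectations over finite supports\<close>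

lemma ereal_mult_sum_nonneg:
  assumes "0 \<le> c"
  shows "ereal c * sum g A = (\<Sum>i\<in>A. ereal c * g i)"
proof (induct A rule: infinite_finite_induct)
  case (insert x F)
  then show ?case using assms by (simp add: ereal_pos_distrib)
qed simp_all

lemma Efin_superset:
  assumes "finite A" "set_pmf q \<subseteq> A"
  shows "Efin q g = (\<Sum>w\<in>A. ereal (pmf q w) * g w)"
  unfolding Efin_def
  by (rule sum.mono_neutral_left) (use assms in \<open>auto simp: set_pmf_iff\<close>)

lemma Efin_cong:
  "(\<And>w. w \<in> set_pmf q \<Longrightarrow> g w = h w) \<Longrightarrow> Efin q g = Efin q h"
  unfolding Efin_def by (auto intro!: sum.cong)

lemma Efin_mono:
  "(\<And>w. w \<in> set_pmf q \<Longrightarrow> g w \<le> h w) \<Longrightarrow> Efin q g \<le> Efin q h"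
  unfolding Efin_def by (rule sum_mono) (auto intro!: ereal_mult_left_mono)

lemma Efin_ereal:
  "Efin q (\<lambda>w. ereal (g w)) = ereal (\<Sum>w\<in>set_pmf q. pmf q w * g w)"
  unfolding Efin_def by simp

lemma Efin_const_add:
  assumes "finite (set_pmf q)"
  shows "Efin q (\<lambda>w. c + g w) = c + Efin q g"
proof -
  have "Efin q (\<lambda>w. c + g w) = (\<Sum>w\<in>set_pmf q. ereal (pmf q w) * c) + Efin q g"
    unfolding Efin_def by (simp add: ereal_pos_distrib sum.distrib)
  also have "(\<Sum>w\<in>set_pmf q. ereal (pmf q w) * c) = (\<Sum>w\<in>set_pmf q. ereal (pmf q w)) * c"
    by (rule sum_ereal_left_distrib[symmetric]) simp
  also have "(\<Sum>w\<in>set_pmf q. ereal (pmf q w)) = 1"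
    using sum_pmf_eq_1[OF assms order_refl] by (simp add: one_ereal_def)
  finally show ?thesis by simp
qed

lemma Efin_add_const:
  "finite (set_pmf q) \<Longrightarrow> Efin q (\<lambda>w. g w + c) = Efin q g + c"
  using Efin_const_add[of q c g] by (simp add: add.commute)

lemma Efin_PInf:
  assumes "finite (set_pmf q)" "w \<in> set_pmf q" "g w = \<infinity>"
  shows "Efin q g = \<infinity>"
  unfolding Efin_def sum_Pinfty using assms pmf_positive[OF assms(2)]
  by (intro conjI bexI[of _ w]) auto

lemma Efin_return: "Efin (return_pmf a) g = g a"
  by (simp add: Efin_def)

lemma Efin_map_inj:
  "inj \<phi> \<Longrightarrow> Efin (map_pmf \<phi> q) g = Efin q (\<lambda>w. g (\<phi> w))"
  unfolding Efin_def set_map_pmf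
  by (subst sum.reindex) (auto simp: inj_on_def pmf_map_inj')

lemma Efin_bind:
  assumes fin: "finite (set_pmf M)" and finF: "\<And>y. y \<in> set_pmf M \<Longrightarrow> finite (set_pmf (F y))"
  shows "Efin (bind_pmf M F) g = Efin M (\<lambda>y. Efin (F y) g)"
proof -
  define Z where "Z = (\<Union>y\<in>set_pmf M. set_pmf (F y))"
  have Zfin: "finite Z" unfolding Z_def using fin finF by auto
  have pmf_bind_sum: "pmf (bind_pmf M F) z = (\<Sum>y\<in>set_pmf M. pmf M y * pmf (F y) z)" for z
    unfolding pmf_bind by (subst integral_measure_pmf[OF fin]) auto
  have "Efin (bind_pmf M F) g = (\<Sum>z\<in>Z. ereal (pmf (bind_pmf M F) z) * g z)"
    unfolding Efin_def Z_def by simp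
  also have "\<dots> = (\<Sum>z\<in>Z. \<Sum>y\<in>set_pmf M. ereal (pmf M y) * (ereal (pmf (F y) z) * g z))"
    unfolding pmf_bind_sum sum_ereal[symmetric]
    by (intro sum.cong refl, subst sum_ereal_left_distrib) (auto simp: mult.assoc[symmetric])
  also have "\<dots> = (\<Sum>y\<in>set_pmf M. \<Sum>z\<in>Z. ereal (pmf M y) * (ereal (pmf (F y) z) * g z))"
    by (rule sum.swap)
  also have "\<dots> = (\<Sum>y\<in>set_pmf M. ereal (pmf M y) * Efin (F y) g)"
    by (intro sum.cong refl, subst Efin_superset[OF Zfin], force simp: Z_def)
       (simp add: ereal_mult_sum_nonneg)
  finally show ?thesis unfolding Efin_def .
qed

lemma length_set_pmf_hist: "h \<in> set_pmf (hist Wd t) \<Longrightarrow> length h = t"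
  by (induct t arbitrary: h) auto

lemma finite_set_pmf_hist:
  "(\<And>s. s < t \<Longrightarrow> finite (set_pmf (Wd (Suc s)))) \<Longrightarrow> finite (set_pmf (hist Wd t))"
  by (induct t) auto

lemma Efin_hist_Suc:
  assumes "\<And>s. s < Suc t \<Longrightarrow> finite (set_pmf (Wd (Suc s)))"
  shows "Efin (hist Wd (Suc t)) g = Efin (hist Wd t) (\<lambda>h. Efin (Wd (Suc t)) (\<lambda>w. g (h @ [w])))"
proof -
  have "Efin (hist Wd (Suc t)) g
      = Efin (hist Wd t) (\<lambda>h. Efin (map_pmf (\<lambda>w. h @ [w]) (Wd (Suc t))) g)"
    unfolding hist.simps using assms by (intro Efin_bind finite_set_pmf_hist) auto
  also have "\<dots> = Efin (hist Wd t) (\<lambda>h. Efin (Wd (Suc t)) (\<lambda>w. g (h @ [w])))"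
    by (subst Efin_map_inj) (auto simp: inj_def)
  finally show ?thesis .
qed

lemma take_Suc_eqD:
  assumes "take (Suc s) h = take (Suc s) h'"
  shows "take s h = take s h' \<and> h ! s = h' ! s"
  using assms by (metis take_take min.absorb1 le_SucI order.refl lessI nth_take)

lemma traj_take_eq:
  "take s h = take s h' \<Longrightarrow> traj f x0 pol h s = traj f x0 pol h' s"
  by (induct s) (auto dest: take_Suc_eqD)

lemma traj_snoc:
  "s \<le> length h \<Longrightarrow> traj f x0 pol (h @ [w]) s = traj f x0 pol h s"
  by (rule traj_take_eq) simp

section \<open>Dynamic programming\<close>

definition finite_noise :: "nat \<Rightarrow> (nat \<Rightarrow> 'w pmf) \<Rightarrow> bool" where
  "finite_noise T Wd \<longleftrightarrow> (\<forall>t<T. finite (set_pmf (Wd (Suc t))))"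

lemma finite_noiseD: "finite_noise T Wd \<Longrightarrow> t < T \<Longrightarrow> finite (set_pmf (Wd (Suc t)))"
  by (simp add: finite_noise_def)

definition running_cost :: "(nat \<Rightarrow> 'x \<Rightarrow> 'u \<Rightarrow> 'w \<Rightarrow> 'x) \<Rightarrow> (nat \<Rightarrow> 'x \<Rightarrow> 'u \<Rightarrow> 'w \<Rightarrow> 'p \<Rightarrow> ereal)
     \<Rightarrow> 'x \<Rightarrow> (nat \<Rightarrow> 'w list \<Rightarrow> 'u) \<Rightarrow> 'p \<Rightarrow> nat \<Rightarrow> 'w list \<Rightarrow> ereal" where
  "running_cost f L x0 pol p t h = (\<Sum>s<t. L s (traj f x0 pol h s) (pol s (take s h)) (h ! s) p)"

text \<open>Indexed by the number \<open>m\<close> of remaining stages; \<open>h\<close> is the history of the first \<open>T - m\<close>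
  noises.\<close>
primrec cost_to_go :: "nat \<Rightarrow> (nat \<Rightarrow> 'w pmf) \<Rightarrow> (nat \<Rightarrow> 'x \<Rightarrow> 'u \<Rightarrow> 'w \<Rightarrow> 'x)
     \<Rightarrow> (nat \<Rightarrow> 'x \<Rightarrow> 'u \<Rightarrow> 'w \<Rightarrow> 'p \<Rightarrow> ereal) \<Rightarrow> ('x \<Rightarrow> 'p \<Rightarrow> ereal) \<Rightarrow> 'x
     \<Rightarrow> (nat \<Rightarrow> 'w list \<Rightarrow> 'u) \<Rightarrow> 'p \<Rightarrow> nat \<Rightarrow> 'w list \<Rightarrow> ereal" where
  "cost_to_go T Wd f L K x0 pol p 0 h = K (traj f x0 pol h T) p"
| "cost_to_go T Wd f L K x0 pol p (Suc m) h = (let t = T - Suc m in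
     Efin (Wd (Suc t)) (\<lambda>w. L t (traj f x0 pol h t) (pol t (take t h)) w p
                             + cost_to_go T Wd f L K x0 pol p m (h @ [w])))"

lemma running_cost_snoc:
  assumes "length h = t"
  shows "running_cost f L x0 pol p (Suc t) (h @ [w])
       = running_cost f L x0 pol p t h + L t (traj f x0 pol h t) (pol t (take t h)) w p"
  unfolding running_cost_def using assms by (simp add: traj_snoc nth_append)

lemma expected_cost_split:
  assumes fin: "finite_noise T Wd" and "m \<le> T"
  shows "Efin (hist Wd T) (\<lambda>h. running_cost f L x0 pol p T h + K (traj f x0 pol h T) p)
       = Efin (hist Wd (T - m)) (\<lambda>h. running_cost f L x0 pol p (T - m) h
                                     + cost_to_go T Wd f L K x0 pol p m h)"
  using \<open>m \<le> T\<close>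
proof (induct m)
  case (Suc m)
  define t where "t = T - Suc m"
  have tm: "T - m = Suc t" "t < T" using Suc(2) by (auto simp: t_def)
  have "Efin (hist Wd (Suc t)) (\<lambda>h. running_cost f L x0 pol p (Suc t) h + cost_to_go T Wd f L K x0 pol p m h)
      = Efin (hist Wd t) (\<lambda>h. Efin (Wd (Suc t)) (\<lambda>w. running_cost f L x0 pol p (Suc t) (h @ [w])
                                                   + cost_to_go T Wd f L K x0 pol p m (h @ [w])))"
    by (rule Efin_hist_Suc) (use finite_noiseD[OF fin] tm in auto)
  also have "\<dots> = Efin (hist Wd t) (\<lambda>h. running_cost f L x0 pol p t h + cost_to_go T Wd f L K x0 pol p (Suc m) h)"
  proof (rule Efin_cong)
    fix h assume "h \<in> set_pmf (hist Wd t)"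
    then have "length h = t" by (rule length_set_pmf_hist)
    then show "Efin (Wd (Suc t)) (\<lambda>w. running_cost f L x0 pol p (Suc t) (h @ [w])
                                     + cost_to_go T Wd f L K x0 pol p m (h @ [w]))
             = running_cost f L x0 pol p t h + cost_to_go T Wd f L K x0 pol p (Suc m) h"
      using finite_noiseD[OF fin tm(2)]
      by (simp add: running_cost_snoc add.assoc Efin_const_add Let_def flip: t_def)
  qed
  finally show ?case using Suc by (simp add: tm(1) flip: t_def)
qed (simp add: running_cost_def)

lemma expected_cost_eq_cost_to_go:
  assumes "finite_noise T Wd"
  shows "Efin (hist Wd T) (\<lambda>h. (\<Sum>t<T. L t (traj f x0 pol h t) (pol t (take t h)) (h ! t) p)
                                + K (traj f x0 pol h T) p)
       = cost_to_go T Wd f L K x0 pol p T []"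
  using expected_cost_split[OF assms order.refl, of f L x0 pol p K]
  by (simp add: running_cost_def Efin_return)

primrec bellman :: "nat \<Rightarrow> (nat \<Rightarrow> 'w pmf) \<Rightarrow> (nat \<Rightarrow> 'x \<Rightarrow> 'u \<Rightarrow> 'w \<Rightarrow> 'x)
     \<Rightarrow> (nat \<Rightarrow> 'x \<Rightarrow> 'u \<Rightarrow> 'w \<Rightarrow> 'p \<Rightarrow> ereal) \<Rightarrow> ('x \<Rightarrow> 'p \<Rightarrow> ereal)
     \<Rightarrow> nat \<Rightarrow> 'x \<Rightarrow> 'p \<Rightarrow> ereal" where
  "bellman T Wd f l k 0 x p = k x p"
| "bellman T Wd f l k (Suc n) x p = (let t = T - Suc n in
     INF u. Efin (Wd (Suc t)) (\<lambda>w. l t x u w p + bellman T Wd f l k n (f t x u w) p))"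

lemma Vrem_eq_bellman:
  "Vrem T Wd f L K \<mu> n x p
     = bellman T Wd f (\<lambda>t x u w. moreau \<mu> (L t x u w)) (\<lambda>x. moreau \<mu> (K x)) n x p"
  by (induct n arbitrary: x) (simp_all add: Let_def)

lemma bellman_mono:
  assumes "\<And>t x u w p. l t x u w p \<le> l' t x u w p" "\<And>x p. k x p \<le> k' x p"
  shows "bellman T Wd f l k n x p \<le> bellman T Wd f l' k' n x p"
proof (induct n arbitrary: x)
  case (Suc n)
  show ?case unfolding bellman.simps Let_def
    by (intro INF_mono' Efin_mono add_mono assms Suc)
qed (simp add: assms)

lemma bellman_le_cost_to_go:
  "m \<le> T \<Longrightarrow> length h = T - m \<Longrightarrow>
   bellman T Wd f L K m (traj f x0 pol h (T - m)) p \<le> cost_to_go T Wd f L K x0 pol p m h"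
proof (induct m arbitrary: h)
  case (Suc m)
  define t where "t = T - Suc m"
  have tm: "T - m = Suc t" "length h = t" using Suc(2,3) by (auto simp: t_def)
  define x where "x = traj f x0 pol h t"
  define u where "u = pol t (take t h)"
  have next_state: "traj f x0 pol (h @ [w]) (T - m) = f t x u w" for w
    using tm by (simp add: x_def u_def traj_snoc nth_append)
  have "bellman T Wd f L K (Suc m) x p
      \<le> Efin (Wd (Suc t)) (\<lambda>w. L t x u w p + bellman T Wd f L K m (f t x u w) p)"
    unfolding bellman.simps Let_def t_def[symmetric] by (rule INF_lower) simp
  also have "\<dots> \<le> Efin (Wd (Suc t)) (\<lambda>w. L t x u w p + cost_to_go T Wd f L K x0 pol p m (h @ [w]))"
    using Suc(1)[of "h @ [_]"] Suc(2) tm next_state by (intro Efin_mono add_mono order.refl) auto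
  also have "\<dots> = cost_to_go T Wd f L K x0 pol p (Suc m) h"
    by (simp add: Let_def x_def u_def flip: t_def)
  finally show ?case by (simp add: x_def flip: t_def)
qed simp

lemma bellman_le_Phi:
  assumes "finite_noise T Wd"
  shows "bellman T Wd f L K T x0 p \<le> Phi T Wd f L K x0 p"
  unfolding Phi_def
  by (rule INF_greatest)
     (use bellman_le_cost_to_go[of T T "[]"] in
      \<open>simp add: expected_cost_eq_cost_to_go[OF assms]\<close>)

primrec feedback_traj :: "(nat \<Rightarrow> 'x \<Rightarrow> 'u \<Rightarrow> 'w \<Rightarrow> 'x) \<Rightarrow> 'x \<Rightarrow> (nat \<Rightarrow> 'x \<Rightarrow> 'u)
     \<Rightarrow> 'w list \<Rightarrow> nat \<Rightarrow> 'x" where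
  "feedback_traj f x0 \<phi> h 0 = x0"
| "feedback_traj f x0 \<phi> h (Suc t) =
     f t (feedback_traj f x0 \<phi> h t) (\<phi> t (feedback_traj f x0 \<phi> h t)) (h ! t)"

definition feedback_policy :: "(nat \<Rightarrow> 'x \<Rightarrow> 'u \<Rightarrow> 'w \<Rightarrow> 'x) \<Rightarrow> 'x \<Rightarrow> (nat \<Rightarrow> 'x \<Rightarrow> 'u)
     \<Rightarrow> nat \<Rightarrow> 'w list \<Rightarrow> 'u" where
  "feedback_policy f x0 \<phi> t h = \<phi> t (feedback_traj f x0 \<phi> h t)"

lemma feedback_traj_take_eq:
  "take s h = take s h' \<Longrightarrow> feedback_traj f x0 \<phi> h s = feedback_traj f x0 \<phi> h' s"
  by (induct s) (auto dest: take_Suc_eqD)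

lemma traj_feedback_policy:
  "traj f x0 (feedback_policy f x0 \<phi>) h t = feedback_traj f x0 \<phi> h t"
  by (induct t) (simp_all add: feedback_policy_def feedback_traj_take_eq[of _ "take _ h" h])

lemma feedback_policy_take:
  "feedback_policy f x0 \<phi> t (take t h) = \<phi> t (traj f x0 (feedback_policy f x0 \<phi>) h t)"
  by (simp add: feedback_policy_def traj_feedback_policy feedback_traj_take_eq[of _ "take t h" h])

lemma cost_to_go_feedback_le:
  assumes fin: "finite_noise T Wd"
    and \<phi>: "\<And>t x. t < T \<Longrightarrow>
       Efin (Wd (Suc t)) (\<lambda>w. L t x (\<phi> t x) w p + bellman T Wd f L K (T - Suc t) (f t x (\<phi> t x) w) p)
         \<le> bellman T Wd f L K (T - t) x p + ereal \<epsilon>"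
  shows "m \<le> T \<Longrightarrow> length h = T - m \<Longrightarrow>
    cost_to_go T Wd f L K x0 (feedback_policy f x0 \<phi>) p m h
      \<le> bellman T Wd f L K m (traj f x0 (feedback_policy f x0 \<phi>) h (T - m)) p + ereal (real m * \<epsilon>)"
proof (induct m arbitrary: h)
  case (Suc m)
  define pol where "pol = feedback_policy f x0 \<phi>"
  define t where "t = T - Suc m"
  have tm: "T - m = Suc t" "T - t = Suc m" "T - Suc t = m" "t < T" "length h = t"
    using Suc(2,3) by (auto simp: t_def)
  define x where "x = traj f x0 pol h t"
  have u: "pol t (take t h) = \<phi> t x"
    by (simp add: pol_def x_def feedback_policy_take)
  have next_state: "traj f x0 pol (h @ [w]) (T - m) = f t x (\<phi> t x) w" for w
    using tm u by (simp add: x_def traj_snoc nth_append)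
  have "cost_to_go T Wd f L K x0 pol p (Suc m) h
      = Efin (Wd (Suc t)) (\<lambda>w. L t x (\<phi> t x) w p + cost_to_go T Wd f L K x0 pol p m (h @ [w]))"
    by (simp add: Let_def x_def u flip: t_def)
  also have "\<dots> \<le> Efin (Wd (Suc t)) (\<lambda>w. L t x (\<phi> t x) w p
                    + bellman T Wd f L K m (f t x (\<phi> t x) w) p + ereal (real m * \<epsilon>))"
    using Suc(1)[of "h @ [_]"] Suc(2) tm next_state
    by (intro Efin_mono) (simp add: add.assoc add_mono pol_def)
  also have "\<dots> \<le> bellman T Wd f L K (Suc m) x p + ereal \<epsilon> + ereal (real m * \<epsilon>)"
    using \<phi>[OF tm(4), of x] by (simp add: Efin_add_const finite_noiseD[OF fin] tm add_right_mono)
  also have "\<dots> = bellman T Wd f L K (Suc m) x p + ereal (real (Suc m) * \<epsilon>)"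
    by (simp only: add.assoc plus_ereal.simps) (simp add: algebra_simps)
  finally show ?case by (simp add: x_def pol_def flip: t_def)
qed simp

lemma ereal_INF_approx:
  fixes G :: "'a \<Rightarrow> ereal"
  assumes "(INF u. G u) \<noteq> -\<infinity>" "0 < \<epsilon>"
  shows "\<exists>u. G u \<le> (INF u. G u) + ereal \<epsilon>"
proof (cases "(INF u. G u) = \<infinity>")
  case False
  with assms have "(INF u. G u) < (INF u. G u) + ereal \<epsilon>"
    by (cases "INF u. G u") auto
  then show ?thesis by (auto simp: INF_less_iff intro: less_imp_le)
qed simp

lemma Phi_le_bellman:
  assumes fin: "finite_noise T Wd"
    and finite_value: "\<And>n x. n \<le> T \<Longrightarrow> bellman T Wd f L K n x p \<noteq> -\<infinity>"
  shows "Phi T Wd f L K x0 p \<le> bellman T Wd f L K T x0 p"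
proof (rule ereal_le_epsilon2)
  fix e :: real assume "0 < e"
  define \<epsilon> where "\<epsilon> = e / (real T + 1)"
  have "0 < \<epsilon>" "real T * \<epsilon> \<le> e" using \<open>0 < e\<close> by (auto simp: \<epsilon>_def field_simps)
  define Q where "Q t x u = Efin (Wd (Suc t)) (\<lambda>w. L t x u w p + bellman T Wd f L K (T - Suc t) (f t x u w) p)"
    for t x u
  have "bellman T Wd f L K (T - t) x p = (INF u. Q t x u)" if "t < T" for t x
  proof -
    have "T - t = Suc (T - Suc t)" using that by simp
    then show ?thesis by (simp add: Q_def Let_def)
  qed
  then have "\<exists>u. Q t x u \<le> bellman T Wd f L K (T - t) x p + ereal \<epsilon>" if "t < T" for t x
    using ereal_INF_approx[OF _ \<open>0 < \<epsilon>\<close>] finite_value that by (metis diff_le_self)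
  then obtain \<phi> where \<phi>: "\<And>t x. t < T \<Longrightarrow> Q t x (\<phi> t x) \<le> bellman T Wd f L K (T - t) x p + ereal \<epsilon>"
    by metis
  define pol where "pol = feedback_policy f x0 \<phi>"
  have "Phi T Wd f L K x0 p
      \<le> Efin (hist Wd T) (\<lambda>h. (\<Sum>t<T. L t (traj f x0 pol h t) (pol t (take t h)) (h ! t) p)
                               + K (traj f x0 pol h T) p)"
    unfolding Phi_def by (rule INF_lower) simp
  also have "\<dots> = cost_to_go T Wd f L K x0 pol p T []"
    by (rule expected_cost_eq_cost_to_go[OF fin])
  also have "\<dots> \<le> bellman T Wd f L K T (traj f x0 pol [] (T - T)) p + ereal (real T * \<epsilon>)"
    unfolding pol_def by (rule cost_to_go_feedback_le[OF fin]) (use \<phi> in \<open>simp_all add: Q_def\<close>)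
  also have "\<dots> \<le> bellman T Wd f L K T x0 p + ereal e"
    using \<open>real T * \<epsilon> \<le> e\<close> by (intro add_mono) simp_all
  finally show "Phi T Wd f L K x0 p \<le> bellman T Wd f L K T x0 p + ereal e" .
qed

section \<open>Lower semicontinuity and lower limits\<close>

lemma lsc_ereal_open_superlevel:
  assumes "lsc_ereal g"
  shows "open {z. y < g z}"
proof (rule open_subopen[THEN iffD2], intro ballI)
  fix z assume "z \<in> {z. y < g z}"
  then have "y < Liminf (at z) g"
    using assms unfolding lsc_ereal_def by (auto intro: less_le_trans)
  moreover have "\<forall>y'<Liminf (at z) g. eventually (\<lambda>a. y' < g a) (at z)"
    using le_Liminf_iff[of "Liminf (at z) g" "at z" g] by simp
  ultimately have "eventually (\<lambda>a. y < g a) (at z)"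
    by blast
  then obtain U where "open U" "z \<in> U" "\<And>a. a \<in> U \<Longrightarrow> a \<noteq> z \<Longrightarrow> y < g a"
    unfolding eventually_at_topological by blast
  with \<open>z \<in> {z. y < g z}\<close> show "\<exists>U. open U \<and> z \<in> U \<and> U \<subseteq> {z. y < g z}"
    by blast
qed

lemma lsc_ereal_le_liminf:
  assumes "lsc_ereal g" "s \<longlonglongrightarrow> z"
  shows "g z \<le> liminf (\<lambda>k. g (s k))"
  unfolding le_Liminf_iff
  using topological_tendstoD[OF assms(2) lsc_ereal_open_superlevel[OF assms(1)]] by auto

lemma lsc_ereal_bounded_below:
  fixes g :: "'a::topological_space \<Rightarrow> ereal"
  assumes "lsc_ereal g" "\<And>z. g z \<noteq> -\<infinity>" "compact S"
  shows "\<exists>B::real. \<forall>z\<in>S. ereal B \<le> g z"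
proof -
  have "S \<subseteq> (\<Union>n::nat. {z. - ereal (real n) < g z})"
  proof
    fix z assume "z \<in> S"
    obtain n :: nat where "- ereal (real n) < g z"
    proof (cases "g z")
      case (real r)
      obtain n :: nat where "- r < real n" using reals_Archimedean2 by blast
      then show ?thesis using real by (intro that[of n]) simp
    qed (use assms(2)[of z] that[of 0] in auto)
    then show "z \<in> (\<Union>n. {z. - ereal (real n) < g z})" by blast
  qed
  then obtain N where "finite N" and N: "S \<subseteq> (\<Union>n\<in>N. {z. - ereal (real n) < g z})"
    using compactE_image[OF assms(3), of UNIV] lsc_ereal_open_superlevel[OF assms(1)] by metis
  have "ereal (- real (Max (insert 0 N))) \<le> g z" if "z \<in> S" for z
  proof -
    obtain n where "n \<in> N" "- ereal (real n) < g z" using N \<open>z \<in> S\<close> by blast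
    moreover have "ereal (- real (Max (insert 0 N))) \<le> - ereal (real n)"
      using \<open>finite N\<close> \<open>n \<in> N\<close> by simp
    ultimately show ?thesis by (meson le_less_trans less_imp_le)
  qed
  then show ?thesis by blast
qed

lemma le_liminf_subseqI:
  fixes X :: "nat \<Rightarrow> ereal"
  assumes "\<And>(r::nat \<Rightarrow> nat) (y::real). strict_mono r \<Longrightarrow> (\<And>k. X (r k) < ereal y) \<Longrightarrow> a \<le> ereal y"
  shows "a \<le> liminf X"
proof (rule dense_ge)
  fix y assume y: "liminf X < y"
  show "a \<le> y"
  proof (cases y)
    case (real z)
    obtain y' where y': "y' < y" "\<not> eventually (\<lambda>k. y' < X k) sequentially"
      using y unfolding not_le[symmetric] le_Liminf_iff by blast
    have "frequently (\<lambda>k. X k < y) cofinite"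
      using y'(2) unfolding not_eventually cofinite_eq_sequentially
      by (rule frequently_elim1) (meson y'(1) not_less le_less_trans)
    then have "infinite {k. X k < y}"
      unfolding frequently_cofinite .
    then obtain r :: "nat \<Rightarrow> nat" where r: "strict_mono r" "\<forall>k. r k \<in> {k. X k < y}"
      using infinite_enumerate by blast
    have "a \<le> ereal z"
      using r(2) unfolding real by (intro assms[OF r(1)]) simp
    then show ?thesis
      unfolding real .
  next
    case MInf
    then show ?thesis using y by simp
  qed simp
qed

lemma le_liminf_INF_compact:
  fixes H :: "nat \<Rightarrow> 'a::metric_space \<Rightarrow> ereal"
  assumes "compact S"
    and G: "\<And>r us u. strict_mono r \<Longrightarrow> (\<And>k. us k \<in> S) \<Longrightarrow> us \<longlonglongrightarrow> u \<Longrightarrow> u \<in> S \<Longrightarrow>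
               G u \<le> liminf (\<lambda>k. H (r k) (us k))"
  shows "(INF u\<in>S. G u) \<le> liminf (\<lambda>k. INF u\<in>S. H k u)"
proof (rule le_liminf_subseqI)
  fix r :: "nat \<Rightarrow> nat" and y :: real
  assume r: "strict_mono r" and "\<And>k. (INF u\<in>S. H (r k) u) < ereal y"
  then obtain us where us: "\<And>k. us k \<in> S" "\<And>k. H (r k) (us k) < ereal y"
    unfolding INF_less_iff by metis
  obtain u s where u: "u \<in> S" "strict_mono s" "(us \<circ> s) \<longlonglongrightarrow> u"
    using compact_imp_seq_compact[OF \<open>compact S\<close>] us(1) unfolding seq_compact_def by metis
  have "(INF u\<in>S. G u) \<le> G u" using u(1) by (rule INF_lower)
  also have "\<dots> \<le> liminf (\<lambda>k. H ((r \<circ> s) k) ((us \<circ> s) k))"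
    using u r by (intro G strict_mono_o) (simp_all add: us(1) comp_def)
  also have "\<dots> \<le> ereal y"
    using us(2) by (intro Liminf_le) (simp_all add: less_imp_le)
  finally show "(INF u\<in>S. G u) \<le> ereal y" .
qed

lemma liminf_add_bounded:
  fixes a b :: "nat \<Rightarrow> ereal"
  assumes "\<And>k. ereal A \<le> a k" "\<And>k. ereal B \<le> b k"
  shows "liminf a + liminf b \<le> liminf (\<lambda>k. a k + b k)"
proof (rule ereal_liminf_add_mono)
  have "ereal A \<le> liminf a" "ereal B \<le> liminf b"
    using assms by (intro Liminf_bounded always_eventually allI; simp)+
  then show "\<not> ((liminf a = \<infinity> \<and> liminf b = -\<infinity>) \<or> (liminf a = -\<infinity> \<and> liminf b = \<infinity>))"
    by auto
qed

lemma liminf_sum_bounded: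
  fixes a :: "nat \<Rightarrow> 'i \<Rightarrow> ereal"
  assumes "finite A" "\<And>i k. i \<in> A \<Longrightarrow> ereal (b i) \<le> a k i"
  shows "(\<Sum>i\<in>A. liminf (\<lambda>k. a k i)) \<le> liminf (\<lambda>k. \<Sum>i\<in>A. a k i)"
  using assms
proof (induct A rule: finite_induct)
  case (insert x F)
  have "(\<Sum>i\<in>insert x F. liminf (\<lambda>k. a k i)) \<le> liminf (\<lambda>k. a k x) + liminf (\<lambda>k. \<Sum>i\<in>F. a k i)"
    using insert by (simp add: add_mono)
  also have "\<dots> \<le> liminf (\<lambda>k. a k x + (\<Sum>i\<in>F. a k i))"
  proof (rule liminf_add_bounded)
    show "ereal (b x) \<le> a k x" for k using insert by auto
    have "(\<Sum>i\<in>F. ereal (b i)) \<le> (\<Sum>i\<in>F. a k i)" for k using insert by (intro sum_mono) auto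
    then show "ereal (\<Sum>i\<in>F. b i) \<le> (\<Sum>i\<in>F. a k i)" for k by simp
  qed
  finally show ?case using insert by simp
qed (simp add: Liminf_const)

lemma Efin_liminf:
  assumes "finite (set_pmf q)" "\<And>w k. w \<in> set_pmf q \<Longrightarrow> ereal (b w) \<le> a k w"
  shows "Efin q (\<lambda>w. liminf (\<lambda>k. a k w)) \<le> liminf (\<lambda>k. Efin q (a k))"
proof -
  have "Efin q (\<lambda>w. liminf (\<lambda>k. a k w)) = (\<Sum>w\<in>set_pmf q. liminf (\<lambda>k. ereal (pmf q w) * a k w))"
    unfolding Efin_def by (intro sum.cong refl) (simp add: Liminf_ereal_mult_left)
  also have "\<dots> \<le> liminf (\<lambda>k. Efin q (a k))"
    unfolding Efin_def
  proof (rule liminf_sum_bounded[OF assms(1)])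
    fix w k assume "w \<in> set_pmf q"
    then show "ereal (pmf q w * b w) \<le> ereal (pmf q w) * a k w"
      using assms(2) by (simp add: ereal_mult_left_mono flip: times_ereal.simps(1))
  qed
  finally show ?thesis .
qed

lemma Efin_liminf_add:
  assumes "finite (set_pmf q)"
    and "\<And>w k. w \<in> set_pmf q \<Longrightarrow> ereal (A w) \<le> a k w"
    and "\<And>w k. w \<in> set_pmf q \<Longrightarrow> ereal (B w) \<le> b k w"
  shows "Efin q (\<lambda>w. liminf (\<lambda>k. a k w) + liminf (\<lambda>k. b k w))
       \<le> liminf (\<lambda>k. Efin q (\<lambda>w. a k w + b k w))"
proof -
  have "Efin q (\<lambda>w. liminf (\<lambda>k. a k w) + liminf (\<lambda>k. b k w))
      \<le> Efin q (\<lambda>w. liminf (\<lambda>k. a k w + b k w))"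
  proof (rule Efin_mono)
    fix w assume "w \<in> set_pmf q"
    then show "liminf (\<lambda>k. a k w) + liminf (\<lambda>k. b k w) \<le> liminf (\<lambda>k. a k w + b k w)"
      using assms(2,3) by (intro liminf_add_bounded[where A="A w" and B="B w"])
  qed
  also have "\<dots> \<le> liminf (\<lambda>k. Efin q (\<lambda>w. a k w + b k w))"
    by (rule Efin_liminf[OF assms(1), where b="\<lambda>w. A w + B w"])
       (use add_mono[OF assms(2,3)] in simp)
  finally show ?thesis .
qed

section \<open>Moreau envelopes\<close>

lemma moreau_le: "moreau \<mu> g p \<le> g p"
  unfolding moreau_def by (rule INF_lower2[of p]) simp_all

lemma INF_le_moreau:
  assumes "0 < \<mu>"
  shows "(INF q. g q) \<le> moreau \<mu> g p"
  unfolding moreau_def using assms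
  by (intro INF_mono') (simp add: add_increasing2)

lemma moreau_le_liminf:
  fixes g :: "'z::topological_space \<Rightarrow> 'p::euclidean_space \<Rightarrow> ereal"
  assumes lsc: "lsc_ereal (\<lambda>(z, p). g z p)"
    and bdd: "\<And>k q. ereal B \<le> g (zs k) q"
    and zs: "zs \<longlonglongrightarrow> z" and ps: "ps \<longlonglongrightarrow> p"
    and \<mu>s: "\<mu>s \<longlonglongrightarrow> 0" "\<And>k. 0 < \<mu>s k"
  shows "g z p \<le> liminf (\<lambda>k. moreau (\<mu>s k) (g (zs k)) (ps k))"
proof (rule le_liminf_subseqI)
  fix r :: "nat \<Rightarrow> nat" and y :: real
  assume r: "strict_mono r" and "\<And>k. moreau (\<mu>s (r k)) (g (zs (r k))) (ps (r k)) < ereal y"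
  then obtain qs where qs: "\<And>k. g (zs (r k)) (qs k) + ereal ((norm (ps (r k) - qs k))\<^sup>2 / (2 * \<mu>s (r k)))
                                < ereal y"
    unfolding moreau_def INF_less_iff by metis
  \<comment> \<open>The quadratic penalty forces the near-minimisers \<open>qs k\<close> towards \<open>ps (r k)\<close>.\<close>
  have "(norm (qs k - ps (r k)))\<^sup>2 \<le> 2 * \<mu>s (r k) * (y - B)" for k
  proof -
    have "ereal B + ereal ((norm (ps (r k) - qs k))\<^sup>2 / (2 * \<mu>s (r k))) < ereal y"
      using qs[of k] bdd[of "r k" "qs k"] by (meson add_right_mono le_less_trans)
    then show ?thesis
      using \<mu>s(2)[of "r k"] by (simp add: norm_minus_commute field_simps)
  qed
  then have dist: "norm (qs k - ps (r k)) \<le> sqrt (2 * \<mu>s (r k) * (y - B))" for k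
    by (simp add: real_le_rsqrt)
  have "(\<lambda>k. sqrt (2 * \<mu>s (r k) * (y - B))) \<longlonglongrightarrow> sqrt (2 * 0 * (y - B))"
    using LIMSEQ_subseq_LIMSEQ[OF \<mu>s(1) r] by (intro tendsto_intros) (simp add: comp_def)
  then have "(\<lambda>k. sqrt (2 * \<mu>s (r k) * (y - B))) \<longlonglongrightarrow> 0"
    by simp
  then have "(\<lambda>k. qs k - ps (r k)) \<longlonglongrightarrow> 0"
    by (rule Lim_null_comparison[OF always_eventually[OF allI], OF dist])
  then have "(\<lambda>k. ps (r k) + (qs k - ps (r k))) \<longlonglongrightarrow> p + 0"
    using LIMSEQ_subseq_LIMSEQ[OF ps r] by (intro tendsto_add) (simp_all add: comp_def)
  then have "(\<lambda>k. (zs (r k), qs k)) \<longlonglongrightarrow> (z, p)"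
    using LIMSEQ_subseq_LIMSEQ[OF zs r] by (intro tendsto_Pair) (simp_all add: comp_def)
  then have "g z p \<le> liminf (\<lambda>k. g (zs (r k)) (qs k))"
    using lsc_ereal_le_liminf[OF lsc] by fastforce
  also have "\<dots> \<le> ereal y"
  proof (intro Liminf_le always_eventually allI)
    fix k
    have "g (zs (r k)) (qs k) \<le> g (zs (r k)) (qs k) + ereal ((norm (ps (r k) - qs k))\<^sup>2 / (2 * \<mu>s (r k)))"
      using \<mu>s(2)[of "r k"] by (simp add: add_increasing2)
    then show "g (zs (r k)) (qs k) \<le> ereal y"
      using qs[of k] by simp
  qed simp
  finally show "g z p \<le> ereal y" .
qed

section \<open>Lower approximation of the value function\<close>

lemma bellman_bounded_below:
  fixes f :: "nat \<Rightarrow> 'x::topological_space \<Rightarrow> 'u::topological_space \<Rightarrow> 'w \<Rightarrow> 'x"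
  assumes fin: "finite_noise T Wd"
    and f_cont: "\<And>t w. t < T \<Longrightarrow> continuous_on UNIV (\<lambda>(x, u). f t x u w)"
    and l_dom: "\<And>t w. t < T \<Longrightarrow> w \<in> set_pmf (Wd (Suc t)) \<Longrightarrow>
                  \<exists>U. compact U \<and> (\<forall>x p. {u. l t x u w p < \<infinity>} \<subseteq> U)"
    and l_bdd: "\<And>t w C. t < T \<Longrightarrow> w \<in> set_pmf (Wd (Suc t)) \<Longrightarrow> compact C \<Longrightarrow>
                  \<exists>B::real. \<forall>x\<in>C. \<forall>u p. ereal B \<le> l t x u w p"
    and k_bdd: "\<And>C. compact C \<Longrightarrow> \<exists>B::real. \<forall>x\<in>C. \<forall>p. ereal B \<le> k x p"
  shows "n \<le> T \<Longrightarrow> compact C \<Longrightarrow> \<exists>B::real. \<forall>x\<in>C. \<forall>p. ereal B \<le> bellman T Wd f l k n x p"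
proof (induct n arbitrary: C)
  case (Suc n)
  define t where "t = T - Suc n"
  have t: "t < T" using Suc(2) by (simp add: t_def)
  define W where "W = set_pmf (Wd (Suc t))"
  obtain w0 where w0: "w0 \<in> W" using set_pmf_not_empty by (fastforce simp: W_def)
  \<comment> \<open>Only controls in \<open>U\<close> have finite expected cost, and from \<open>C\<close> they lead into the compact \<open>D\<close>.\<close>
  obtain U where U: "compact U" "\<And>x p. {u. l t x u w0 p < \<infinity>} \<subseteq> U"
    using l_dom[OF t w0[unfolded W_def]] by blast
  define D where "D = (\<Union>w\<in>W. (\<lambda>(x, u). f t x u w) ` (C \<times> U))"
  have "compact D"
    unfolding D_def using finite_noiseD[OF fin t] Suc(3) U(1) f_cont[OF t]
    by (intro compact_UN compact_continuous_image compact_Times)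
       (auto simp: W_def intro: continuous_on_subset)
  then obtain B1 where B1: "\<And>y p. y \<in> D \<Longrightarrow> ereal B1 \<le> bellman T Wd f l k n y p"
    using Suc(1) Suc(2) by (meson Suc_leD)
  have "\<forall>w\<in>W. \<exists>b. \<forall>x\<in>C. \<forall>u p. ereal b \<le> l t x u w p"
    using l_bdd[OF t _ Suc(3)] by (simp add: W_def)
  then obtain b where b: "\<And>w x u p. w \<in> W \<Longrightarrow> x \<in> C \<Longrightarrow> ereal (b w) \<le> l t x u w p"
    by metis
  have "ereal (\<Sum>w\<in>W. pmf (Wd (Suc t)) w * (b w + B1))
      \<le> Efin (Wd (Suc t)) (\<lambda>w. l t x u w p + bellman T Wd f l k n (f t x u w) p)"
    if "x \<in> C" for x u p
  proof (cases "u \<in> U")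
    case True
    have "ereal (b w + B1) \<le> l t x u w p + bellman T Wd f l k n (f t x u w) p" if "w \<in> W" for w
      using add_mono[OF b[OF that \<open>x \<in> C\<close>] B1] \<open>x \<in> C\<close> True that by (force simp: D_def)
    then have "Efin (Wd (Suc t)) (\<lambda>w. ereal (b w + B1))
             \<le> Efin (Wd (Suc t)) (\<lambda>w. l t x u w p + bellman T Wd f l k n (f t x u w) p)"
      by (intro Efin_mono) (simp add: W_def)
    then show ?thesis by (simp add: Efin_ereal W_def)
  next
    case False
    then have "l t x u w0 p = \<infinity>" using U(2) by (auto simp: less_top)
    then show ?thesis
      using finite_noiseD[OF fin t] w0 by (subst Efin_PInf[of _ w0]) (auto simp: W_def)
  qed
  then show ?case
    unfolding bellman.simps Let_def t_def[symmetric] by (blast intro: INF_greatest)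
qed (use k_bdd in simp)

locale multistage_setting =
  fixes T :: nat and Wd :: "nat \<Rightarrow> 'w pmf"
    and f :: "nat \<Rightarrow> 'x::heine_borel \<Rightarrow> 'u::heine_borel \<Rightarrow> 'w \<Rightarrow> 'x"
    and L :: "nat \<Rightarrow> 'x \<Rightarrow> 'u \<Rightarrow> 'w \<Rightarrow> 'p::euclidean_space \<Rightarrow> ereal"
    and K :: "'x \<Rightarrow> 'p \<Rightarrow> ereal"
    and P :: "'p set"
  assumes fin: "finite_noise T Wd"
    and f_cont: "\<And>t w. t < T \<Longrightarrow> continuous_on UNIV (\<lambda>(x, u). f t x u w)"
    and L_lsc: "\<And>t w. t < T \<Longrightarrow> w \<in> set_pmf (Wd (Suc t)) \<Longrightarrow> lsc_ereal (\<lambda>((x, u), p). L t x u w p)"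
    and L_proper: "\<And>t w x u p. t < T \<Longrightarrow> w \<in> set_pmf (Wd (Suc t)) \<Longrightarrow> L t x u w p \<noteq> -\<infinity>"
    and L_dom_u: "\<And>t w. t < T \<Longrightarrow> w \<in> set_pmf (Wd (Suc t)) \<Longrightarrow>
                    \<exists>U. compact U \<and> (\<forall>x p. {u. L t x u w p < \<infinity>} \<subseteq> U)"
    and L_dom_p: "\<And>t w x u. t < T \<Longrightarrow> w \<in> set_pmf (Wd (Suc t)) \<Longrightarrow> {p. L t x u w p < \<infinity>} \<subseteq> P"
    and K_lsc: "lsc_ereal (\<lambda>(x, p). K x p)"
    and K_proper: "\<And>x p. K x p \<noteq> -\<infinity>"
    and K_dom: "\<And>x. {p. K x p < \<infinity>} \<subseteq> P"
    and compact_P: "compact P"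
begin

lemma L_bounded_below:
  assumes tw: "t < T" "w \<in> set_pmf (Wd (Suc t))" and "compact C"
  shows "\<exists>B::real. \<forall>x\<in>C. \<forall>u p. ereal B \<le> L t x u w p"
proof -
  obtain U where U: "compact U" "\<And>x p. {u. L t x u w p < \<infinity>} \<subseteq> U"
    using L_dom_u[OF tw] by blast
  have "compact ((C \<times> U) \<times> P)"
    using \<open>compact C\<close> U(1) compact_P by (intro compact_Times)
  then obtain B where B: "\<And>x u p. ((x, u), p) \<in> (C \<times> U) \<times> P \<Longrightarrow> ereal B \<le> L t x u w p"
    using lsc_ereal_bounded_below[OF L_lsc[OF tw]] L_proper[OF tw] by fastforce
  have "ereal B \<le> L t x u w p" if "x \<in> C" for x u p
  proof (cases "u \<in> U \<and> p \<in> P")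
    case False
    then have "L t x u w p = \<infinity>"
      using U(2)[of x p] L_dom_p[OF tw, of x u] by (auto simp: less_top)
    then show ?thesis by simp
  qed (use B that in simp)
  then show ?thesis by blast
qed

lemma K_bounded_below:
  assumes "compact C"
  shows "\<exists>B::real. \<forall>x\<in>C. \<forall>p. ereal B \<le> K x p"
proof -
  have "compact (C \<times> P)"
    using assms compact_P by (intro compact_Times)
  then obtain B where B: "\<And>x p. (x, p) \<in> C \<times> P \<Longrightarrow> ereal B \<le> K x p"
    using lsc_ereal_bounded_below[OF K_lsc] K_proper by fastforce
  have "ereal B \<le> K x p" if "x \<in> C" for x p
  proof (cases "p \<in> P")
    case False
    then have "K x p = \<infinity>" using K_dom[of x] by (auto simp: less_top)
    then show ?thesis by simp
  qed (use B that in simp)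
  then show ?thesis by blast
qed

lemma bellman_neq_MInfty:
  assumes "n \<le> T"
  shows "bellman T Wd f L K n x p \<noteq> -\<infinity>"
proof -
  obtain B where "\<forall>x'\<in>{x}. \<forall>p. ereal B \<le> bellman T Wd f L K n x' p"
    using bellman_bounded_below[where f=f and l=L and k=K,
            OF fin f_cont L_dom_u L_bounded_below K_bounded_below assms compact_sing]
    by blast
  then have "ereal B \<le> bellman T Wd f L K n x p" by blast
  then show ?thesis by auto
qed

text \<open>Moreau envelopes lie above the infimum over the parameter, so the value functions of the
  infima in \<open>p\<close> bound all the smoothed value functions from below, uniformly in \<open>\<mu>\<close>.\<close>
lemma Vrem_bounded_below:
  assumes "n \<le> T" "compact C"
  shows "\<exists>B::real. \<forall>\<mu>>0. \<forall>x\<in>C. \<forall>p. ereal B \<le> Vrem T Wd f L K \<mu> n x p"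
proof -
  define l where "l t x u w p = (INF q. L t x u w q)" for t x u w and p :: 'p
  define k where "k x p = (INF q. K x q)" for x and p :: 'p
  have "\<exists>B::real. \<forall>x\<in>C. \<forall>p. ereal B \<le> bellman T Wd f l k n x p"
  proof (rule bellman_bounded_below[where f=f and l=l and k=k, OF fin f_cont _ _ _ assms])
    show "\<exists>U. compact U \<and> (\<forall>x p. {u. l t x u w p < \<infinity>} \<subseteq> U)"
      if tw: "t < T" "w \<in> set_pmf (Wd (Suc t))" for t w
    proof -
      obtain U where U: "compact U" "\<And>x q. {u. L t x u w q < \<infinity>} \<subseteq> U"
        using L_dom_u[OF tw] by blast
      have "{u. l t x u w p < \<infinity>} \<subseteq> U" for x p
      proof
        fix u assume "u \<in> {u. l t x u w p < \<infinity>}"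
        then obtain q where "L t x u w q < \<infinity>"
          unfolding l_def mem_Collect_eq INF_less_iff by blast
        then show "u \<in> U" using U(2) by blast
      qed
      with U(1) show ?thesis by blast
    qed
    show "\<exists>B::real. \<forall>x\<in>C. \<forall>u p. ereal B \<le> l t x u w p"
      if "t < T" "w \<in> set_pmf (Wd (Suc t))" "compact C" for t w C
      using L_bounded_below[OF that] by (fastforce simp: l_def intro: INF_greatest)
    show "\<exists>B::real. \<forall>x\<in>C. \<forall>p. ereal B \<le> k x p" if "compact C" for C
      using K_bounded_below[OF that] by (fastforce simp: k_def intro: INF_greatest)
  qed
  moreover have "bellman T Wd f l k n x p \<le> Vrem T Wd f L K \<mu> n x p" if "0 < \<mu>" for \<mu> x p
    unfolding Vrem_eq_bellman l_def k_def using that by (intro bellman_mono INF_le_moreau)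
  ultimately show ?thesis by (meson order.trans)
qed

lemma Vrem_le_Phi:
  "Vrem T Wd f L K \<mu> T x0 p \<le> Phi T Wd f L K x0 p"
proof -
  have "Vrem T Wd f L K \<mu> T x0 p \<le> bellman T Wd f L K T x0 p"
    unfolding Vrem_eq_bellman by (intro bellman_mono moreau_le)
  also have "\<dots> \<le> Phi T Wd f L K x0 p"
    by (rule bellman_le_Phi[OF fin])
  finally show ?thesis .
qed

lemma L_le_liminf_moreau:
  assumes tw: "t < T" "w \<in> set_pmf (Wd (Suc t))"
    and xs: "xs \<longlonglongrightarrow> x" and us: "us \<longlonglongrightarrow> u" and ps: "ps \<longlonglongrightarrow> p"
    and \<mu>s: "\<mu>s \<longlonglongrightarrow> 0" "\<And>k. 0 < \<mu>s k"
  obtains B :: real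
  where "\<And>k. ereal B \<le> moreau (\<mu>s k) (L t (xs k) (us k) w) (ps k)"
    and "L t x u w p \<le> liminf (\<lambda>k. moreau (\<mu>s k) (L t (xs k) (us k) w) (ps k))"
proof -
  obtain B where B: "\<And>x' u q. x' \<in> insert x (range xs) \<Longrightarrow> ereal B \<le> L t x' u w q"
    using L_bounded_below[OF tw compact_sequence_with_limit[OF xs]] by blast
  have "ereal B \<le> moreau (\<mu>s k) (L t (xs k) (us k) w) (ps k)" for k
  proof -
    have "ereal B \<le> (INF q. L t (xs k) (us k) w q)"
      by (rule INF_greatest) (rule B, simp)
    also have "\<dots> \<le> moreau (\<mu>s k) (L t (xs k) (us k) w) (ps k)"
      by (rule INF_le_moreau[OF \<mu>s(2)])
    finally show ?thesis .
  qed
  moreover have "L t x u w p \<le> liminf (\<lambda>k. moreau (\<mu>s k) (L t (xs k) (us k) w) (ps k))"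
    using moreau_le_liminf[where g="\<lambda>(x, u) q. L t x u w q" and B=B,
            OF _ _ tendsto_Pair[OF xs us] ps \<mu>s] L_lsc[OF tw] B
    by simp
  ultimately show thesis
    by (rule that)
qed

lemma stage_cost_le_liminf:
  assumes "t < T" "n \<le> T"
    and next_stage: "\<And>xs x ps p \<mu>s. xs \<longlonglongrightarrow> x \<Longrightarrow> ps \<longlonglongrightarrow> p \<Longrightarrow> \<mu>s \<longlonglongrightarrow> 0 \<Longrightarrow> (\<And>k. 0 < \<mu>s k) \<Longrightarrow>
        bellman T Wd f L K n x p \<le> liminf (\<lambda>k. Vrem T Wd f L K (\<mu>s k) n (xs k) (ps k))"
    and xs: "xs \<longlonglongrightarrow> x" and us: "us \<longlonglongrightarrow> u" and ps: "ps \<longlonglongrightarrow> p"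
    and \<mu>s: "\<mu>s \<longlonglongrightarrow> 0" "\<And>k. 0 < \<mu>s k"
  shows "Efin (Wd (Suc t)) (\<lambda>w. L t x u w p + bellman T Wd f L K n (f t x u w) p)
    \<le> liminf (\<lambda>k. Efin (Wd (Suc t)) (\<lambda>w. moreau (\<mu>s k) (L t (xs k) (us k) w) (ps k)
                                         + Vrem T Wd f L K (\<mu>s k) n (f t (xs k) (us k) w) (ps k)))"
    (is "_ \<le> liminf (\<lambda>k. Efin _ (\<lambda>w. ?a k w + ?b k w))")
proof -
  have next_state: "\<exists>B::real. (\<forall>k. ereal B \<le> ?b k w)
      \<and> bellman T Wd f L K n (f t x u w) p \<le> liminf (\<lambda>k. ?b k w)" for w
  proof -
    have f_lim: "(\<lambda>k. f t (xs k) (us k) w) \<longlonglongrightarrow> f t x u w"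
      using continuous_on_tendsto_compose[OF f_cont[OF \<open>t < T\<close>] tendsto_Pair[OF xs us]] by simp
    obtain B where "\<And>\<mu> y q. 0 < \<mu> \<Longrightarrow> y \<in> insert (f t x u w) (range (\<lambda>k. f t (xs k) (us k) w)) \<Longrightarrow>
                            ereal B \<le> Vrem T Wd f L K \<mu> n y q"
      using Vrem_bounded_below[OF \<open>n \<le> T\<close> compact_sequence_with_limit[OF f_lim]] by blast
    then have "ereal B \<le> ?b k w" for k
      using \<mu>s(2) by simp
    with next_stage[OF f_lim ps \<mu>s] show ?thesis by blast
  qed
  have "\<forall>w\<in>set_pmf (Wd (Suc t)). \<exists>B::real. (\<forall>k. ereal B \<le> ?a k w)
                                            \<and> L t x u w p \<le> liminf (\<lambda>k. ?a k w)"
    by (blast intro: L_le_liminf_moreau[OF \<open>t < T\<close> _ xs us ps \<mu>s])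
  then obtain Ba where Ba: "\<forall>w\<in>set_pmf (Wd (Suc t)). (\<forall>k. ereal (Ba w) \<le> ?a k w)
                                                      \<and> L t x u w p \<le> liminf (\<lambda>k. ?a k w)"
    by (rule bchoice[THEN exE])
  obtain Bb where Bb: "\<forall>w. (\<forall>k. ereal (Bb w) \<le> ?b k w)
                              \<and> bellman T Wd f L K n (f t x u w) p \<le> liminf (\<lambda>k. ?b k w)"
    using choice[OF allI[OF next_state]] by (rule exE)
  have "Efin (Wd (Suc t)) (\<lambda>w. L t x u w p + bellman T Wd f L K n (f t x u w) p)
      \<le> Efin (Wd (Suc t)) (\<lambda>w. liminf (\<lambda>k. ?a k w) + liminf (\<lambda>k. ?b k w))"
    using Ba Bb by (intro Efin_mono add_mono) simp_all
  also have "\<dots> \<le> liminf (\<lambda>k. Efin (Wd (Suc t)) (\<lambda>w. ?a k w + ?b k w))"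
    using Ba Bb
    by (intro Efin_liminf_add[OF finite_noiseD[OF fin \<open>t < T\<close>], where A=Ba and B=Bb]) simp_all
  finally show ?thesis .
qed

lemma bellman_le_liminf_Vrem:
  "n \<le> T \<Longrightarrow> xs \<longlonglongrightarrow> x \<Longrightarrow> ps \<longlonglongrightarrow> p \<Longrightarrow> \<mu>s \<longlonglongrightarrow> 0 \<Longrightarrow> (\<And>k. 0 < \<mu>s k) \<Longrightarrow>
   bellman T Wd f L K n x p \<le> liminf (\<lambda>k. Vrem T Wd f L K (\<mu>s k) n (xs k) (ps k))"
proof (induct n arbitrary: xs x ps p \<mu>s)
  case 0
  obtain B where "\<And>x' q. x' \<in> insert x (range xs) \<Longrightarrow> ereal B \<le> K x' q"
    using K_bounded_below[OF compact_sequence_with_limit[OF 0(2)]] by blast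
  then show ?case
    using moreau_le_liminf[where B=B, OF K_lsc _ 0(2-5)] by simp
next
  case (Suc n)
  define t where "t = T - Suc n"
  have t: "t < T" using Suc(2) by (simp add: t_def)
  obtain w0 where w0: "w0 \<in> set_pmf (Wd (Suc t))" using set_pmf_not_empty by fastforce
  obtain U where U: "compact U" "\<And>x p. {u. L t x u w0 p < \<infinity>} \<subseteq> U"
    using L_dom_u[OF t w0] by blast
  define H where "H k u = Efin (Wd (Suc t)) (\<lambda>w. moreau (\<mu>s k) (L t (xs k) u w) (ps k)
                                 + Vrem T Wd f L K (\<mu>s k) n (f t (xs k) u w) (ps k))" for k u
  have H_top: "H k u = \<infinity>" if "u \<notin> U" for k u
  proof -
    have "L t (xs k) u w0 q = \<infinity>" for q
      using U(2)[of "xs k" q] that by (auto simp: less_top)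
    then have "moreau (\<mu>s k) (L t (xs k) u w0) (ps k) = \<infinity>"
      using INF_le_moreau[OF Suc(6), where g="L t (xs k) u w0" and p="ps k"] by simp
    then show ?thesis
      unfolding H_def by (intro Efin_PInf[OF finite_noiseD[OF fin t] w0]) simp
  qed
  have H_U: "(INF u. H k u) = (INF u\<in>U. H k u)" for k
  proof (rule antisym)
    show "(INF u. H k u) \<le> (INF u\<in>U. H k u)"
      by (rule INF_superset_mono) simp_all
    show "(INF u\<in>U. H k u) \<le> (INF u. H k u)"
      by (rule INF_greatest) (metis INF_lower H_top top_greatest top_ereal_def)
  qed
  have "bellman T Wd f L K (Suc n) x p
      = (INF u. Efin (Wd (Suc t)) (\<lambda>w. L t x u w p + bellman T Wd f L K n (f t x u w) p))"
    by (simp add: Let_def flip: t_def)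
  also have "\<dots> \<le> (INF u\<in>U. Efin (Wd (Suc t)) (\<lambda>w. L t x u w p + bellman T Wd f L K n (f t x u w) p))"
    by (rule INF_superset_mono) simp_all
  also have "\<dots> \<le> liminf (\<lambda>k. INF u\<in>U. H k u)"
  proof (rule le_liminf_INF_compact[OF U(1)])
    fix r :: "nat \<Rightarrow> nat" and us :: "nat \<Rightarrow> 'u" and u
    assume r: "strict_mono r" and us: "us \<longlonglongrightarrow> u"
    have sub: "(\<lambda>k. X (r k)) \<longlonglongrightarrow> a" if "X \<longlonglongrightarrow> a" for X :: "nat \<Rightarrow> 'b::topological_space" and a
      using LIMSEQ_subseq_LIMSEQ[OF that r] by (simp add: comp_def)
    show "Efin (Wd (Suc t)) (\<lambda>w. L t x u w p + bellman T Wd f L K n (f t x u w) p)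
        \<le> liminf (\<lambda>k. H (r k) (us k))"
      unfolding H_def
      by (rule stage_cost_le_liminf[OF t _ Suc(1)[OF Suc_leD[OF Suc(2)]] sub us sub sub])
         (use Suc(2-6) in \<open>simp_all add: Suc_leD\<close>)
  qed
  also have "\<dots> = liminf (\<lambda>k. Vrem T Wd f L K (\<mu>s k) (Suc n) (xs k) (ps k))"
    unfolding H_U[symmetric] by (simp add: H_def Let_def flip: t_def)
  finally show ?case .
qed

lemma INF_Phi_le_liminf_INF_Vrem:
  assumes "compact Pad" "\<mu>s \<longlonglongrightarrow> 0" "\<And>k. 0 < \<mu>s k"
  shows "(INF p\<in>Pad. Phi T Wd f L K x0 p) \<le> liminf (\<lambda>k. INF p\<in>Pad. Vrem T Wd f L K (\<mu>s k) T x0 p)"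
proof (rule le_liminf_INF_compact[OF assms(1)])
  fix r :: "nat \<Rightarrow> nat" and ps :: "nat \<Rightarrow> 'p" and p assume "strict_mono r" "ps \<longlonglongrightarrow> p"
  have "Phi T Wd f L K x0 p \<le> bellman T Wd f L K T x0 p"
    by (rule Phi_le_bellman[OF fin bellman_neq_MInfty])
  also have "\<dots> \<le> liminf (\<lambda>k. Vrem T Wd f L K (\<mu>s (r k)) T x0 (ps k))"
    using \<open>ps \<longlonglongrightarrow> p\<close> LIMSEQ_subseq_LIMSEQ[OF assms(2) \<open>strict_mono r\<close>] assms(3)
    by (intro bellman_le_liminf_Vrem) (simp_all add: comp_def)
  finally show "Phi T Wd f L K x0 p \<le> liminf (\<lambda>k. Vrem T Wd f L K (\<mu>s (r k)) T x0 (ps k))" .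
qed

end

lemma tendsto_if_le_liminf:
  fixes a :: "nat \<Rightarrow> ereal"
  assumes "\<And>n. a n \<le> S" "S \<le> liminf a"
  shows "a \<longlonglongrightarrow> S"
proof -
  have "limsup a \<le> S"
    using assms(1) by (intro Limsup_bounded always_eventually allI)
  moreover have "liminf a \<le> limsup a"
    by (rule Liminf_le_Limsup) simp
  ultimately have "liminf a = S" "limsup a = S"
    using assms(2) by (meson antisym order.trans)+
  then show ?thesis
    by (simp add: tendsto_iff_Liminf_eq_Limsup)
qed

lemma affine_map_continuous:
  fixes h :: "'a::euclidean_space \<Rightarrow> 'b::real_normed_vector"
  assumes "affine_map h"
  shows "continuous_on UNIV h"
proof -
  obtain l c where "linear l" "\<And>z. h z = l z + c"
    using assms unfolding affine_map_def by blast
  then show ?thesis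
    by (simp add: linear_continuous_on linear_conv_bounded_linear continuous_on_add)
qed

theorem corollary1:
  fixes T :: nat
    and Wd :: "nat \<Rightarrow> 'w::euclidean_space pmf"
    and f :: "nat \<Rightarrow> 'x::euclidean_space \<Rightarrow> 'u::euclidean_space \<Rightarrow> 'w \<Rightarrow> 'x"
    and L :: "nat \<Rightarrow> 'x \<Rightarrow> 'u \<Rightarrow> 'w \<Rightarrow> 'p::euclidean_space \<Rightarrow> ereal"
    and K :: "'x \<Rightarrow> 'p \<Rightarrow> ereal"
    and x0 :: 'x
    and Pad :: "'p set"
    and \<mu> :: "nat \<Rightarrow> real"
  assumes T1: "T \<ge> 1"
    and A1: "\<And>t. t \<in> {1..T} \<Longrightarrow> finite (set_pmf (Wd t))"
    and A2i: "\<exists>p\<in>Pad. Phi T Wd f L K x0 p < \<infinity>"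
    and A2ii: "\<And>t w. t < T \<Longrightarrow> affine_map (\<lambda>(x,u). f t x u w)"
    and A2iii: "\<And>t w. t < T \<Longrightarrow> w \<in> set_pmf (Wd (Suc t)) \<Longrightarrow>
                  Gamma_K (\<lambda>(x,u) p. L t x u w p)"
    and A2iv: "Gamma K"
    and A4: "\<exists>PP. compact PP \<and>
               (\<forall>t<T. \<forall>w\<in>set_pmf (Wd (Suc t)). \<forall>x u. {p. L t x u w p < \<infinity>} \<subseteq> PP) \<and>
               (\<forall>x. {p. K x p < \<infinity>} \<subseteq> PP)"
    and Pad_compact: "compact Pad"
    and mu_pos: "\<And>n. \<mu> n > 0"
    and mu_decr: "decseq \<mu>"
    and mu_lim: "\<mu> \<longlonglongrightarrow> 0"
  shows "(\<forall>n. (INF p\<in>Pad. Vlow T Wd f L K (\<mu> n) 0 x0 p) \<le> (INF p\<in>Pad. Phi T Wd f L K x0 p))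
         \<and> (\<lambda>n. INF p\<in>Pad. Vlow T Wd f L K (\<mu> n) 0 x0 p) \<longlonglongrightarrow> (INF p\<in>Pad. Phi T Wd f L K x0 p)"
proof -
  obtain P where P: "compact P"
    "\<And>t w x u. t < T \<Longrightarrow> w \<in> set_pmf (Wd (Suc t)) \<Longrightarrow> {p. L t x u w p < \<infinity>} \<subseteq> P"
    "\<And>x. {p. K x p < \<infinity>} \<subseteq> P"
    using A4 by blast
  interpret multistage_setting T Wd f L K P
  proof
    show "finite_noise T Wd"
      using A1 by (simp add: finite_noise_def)
  qed (use A2ii affine_map_continuous A2iii A2iv P in
       \<open>auto simp: Gamma_K_def Gamma_def\<close>)
  define a where "a n = (INF p\<in>Pad. Vlow T Wd f L K (\<mu> n) 0 x0 p)" for n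
  define S where "S = (INF p\<in>Pad. Phi T Wd f L K x0 p)"
  have below: "a n \<le> S" for n
    unfolding a_def S_def Vlow_def by (intro INF_mono') (simp add: Vrem_le_Phi)
  have "S \<le> liminf a"
    unfolding a_def S_def Vlow_def using INF_Phi_le_liminf_INF_Vrem[OF Pad_compact mu_lim mu_pos]
    by simp
  then have "a \<longlonglongrightarrow> S"
    by (rule tendsto_if_le_liminf[OF below])
  with below show ?thesis
    unfolding a_def S_def by blast
qed

end
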